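(* Let $G=\langle a,b\mid a^2b=ba^2\rangle$, let $\hat G$ be its pro-$2$ completion, and let $\hat H\subset\hat G$ be the kernel of the continuous homomorphism $\hat G\to\mathbb Z/2\mathbb Z$ sending $a\mapsto0$ and $b\mapsto1$ (equivalently, the pro-$2$ completion of the kernel $H$ of the corresponding homomorphism $G\to\mathbb Z/2\mathbb Z$). Then: (1) the reduction maps $H^1(\hat G,\mathbb Z/2^n\mathbb Z)\to H^1(\hat G,\mathbb Z/2\mathbb Z)$ are surjective for all $n\ge1$; (2) the reduction map $H^1(\hat H,\mathbb Z/4\mathbb Z)\to H^1(\hat H,\mathbb Z/2\mathbb Z)$ is not surjective; (3) there exist $\chi_1,\chi_2,\chi_3\in H^1(\hat G,\mathbb Z/2\mathbb Z)$ such that the mod 2 Massey product $\langle\chi_1,\chi_2,\chi_3\rangle$ is defined but does not vanish.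
   Context: All coefficient modules have trivial action. Massey products: for $a_1,\dots,a_n\in H^1$ of a differential graded ring $A$, a defining system is $a_{ij}\in A^1$ ($1\le i<j\le n+1$, $(i,j)\neq(1,n+1)$) with $\partial a_{i,i+1}=0$ representing $a_i$ and $\partial a_{ij}=-\sum_{l=i+1}^{j-1}a_{il}a_{lj}$; its value is the class of $-\sum_{l=2}^na_{1l}a_{l,n+1}$; $\langle a_1,\dots,a_n\rangle$ is the set of values, defined if nonempty, vanishing if it contains $0$. Mod 2 Massey products of $\hat G$ are taken in continuous cochains $C^*(\hat G,\mathbb Z/2\mathbb Z)$ with cup product. *)

theory Defs
  imports "HOL-Algebra.Algebra"
begin

datatype gen = Ga | Gb

type_synonym letter = "gen \<times> bool"   (* (generator, True = positive exponent) *)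

inductive wrel :: "letter list \<Rightarrow> letter list \<Rightarrow> bool" where
  wrefl: "wrel u u"
| wsym: "wrel u v \<Longrightarrow> wrel v u"
| wtrans: "wrel u v \<Longrightarrow> wrel v w \<Longrightarrow> wrel u w"
| wcancel: "wrel (u @ [(g, s), (g, \<not> s)] @ v) (u @ v)"
| wrelator: "wrel (u @ [(Ga, True), (Ga, True), (Gb, True)] @ v)
                  (u @ [(Gb, True), (Ga, True), (Ga, True)] @ v)"

definition Gmult :: "letter list set \<Rightarrow> letter list set \<Rightarrow> letter list set" where
  "Gmult A1 A2 = {w. \<exists>p\<in>A1. \<exists>q\<in>A2. wrel w (p @ q)}"

definition Gp :: "letter list set monoid" where
  "Gp = \<lparr>carrier = UNIV // {(u, v). wrel u v}, monoid.mult = Gmult, monoid.one = {w. wrel w []}\<rparr>"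

definition Hsub :: "letter list set set" where
  "Hsub = {S \<in> carrier Gp. \<forall>w\<in>S. even (length (filter (\<lambda>l. fst l = Gb) w))}"

definition Hp :: "letter list set monoid" where
  "Hp = Gp\<lparr>carrier := Hsub\<rparr>"

text \<open>Open normal subgroups of the pro-2 completion correspond to normal subgroups
  of 2-power index of the discrete group.\<close>
definition pro2_open :: "('g, 'b) monoid_scheme \<Rightarrow> 'g set \<Rightarrow> bool" where
  "pro2_open \<Gamma> N \<longleftrightarrow> N \<lhd> \<Gamma> \<and> finite (rcosets\<^bsub>\<Gamma>\<^esub> N) \<and> (\<exists>k::nat. card (rcosets\<^bsub>\<Gamma>\<^esub> N) = 2 ^ k)"

definition cont1 :: "('g, 'b) monoid_scheme \<Rightarrow> ('g \<Rightarrow> int) \<Rightarrow> bool" where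
  "cont1 \<Gamma> f \<longleftrightarrow> (\<exists>N. pro2_open \<Gamma> N \<and>
     (\<forall>x\<in>carrier \<Gamma>. \<forall>y\<in>carrier \<Gamma>. x \<otimes>\<^bsub>\<Gamma>\<^esub> inv\<^bsub>\<Gamma>\<^esub> y \<in> N \<longrightarrow> f x = f y))"

definition C1 :: "('g, 'b) monoid_scheme \<Rightarrow> int \<Rightarrow> ('g \<Rightarrow> int) set" where
  "C1 \<Gamma> m = {f. cont1 \<Gamma> f \<and> (\<forall>x. f x \<in> {0..<m}) \<and> (\<forall>x. x \<notin> carrier \<Gamma> \<longrightarrow> f x = 0)}"

text \<open>H^1 with trivial action: 1-cocycles (the 1-coboundaries are 0).
  Differential: (d f)(x,y) = f y - f (x y) + f x.\<close>
definition H1 :: "('g, 'b) monoid_scheme \<Rightarrow> int \<Rightarrow> ('g \<Rightarrow> int) set" where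
  "H1 \<Gamma> m = {f \<in> C1 \<Gamma> m. \<forall>x\<in>carrier \<Gamma>. \<forall>y\<in>carrier \<Gamma>.
                 (f y - f (x \<otimes>\<^bsub>\<Gamma>\<^esub> y) + f x) mod m = 0}"

definition reduce2 :: "('g \<Rightarrow> int) \<Rightarrow> ('g \<Rightarrow> int)" where
  "reduce2 f = (\<lambda>x. f x mod 2)"

definition massey3_values ::
  "('g, 'b) monoid_scheme \<Rightarrow> ('g \<Rightarrow> int) \<Rightarrow> ('g \<Rightarrow> int) \<Rightarrow> ('g \<Rightarrow> int) \<Rightarrow> ('g \<Rightarrow> 'g \<Rightarrow> int) set" where
  "massey3_values \<Gamma> a12 a23 a34 =
     {v. \<exists>a13 \<in> C1 \<Gamma> 2. \<exists>a24 \<in> C1 \<Gamma> 2.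
        (\<forall>x\<in>carrier \<Gamma>. \<forall>y\<in>carrier \<Gamma>.
           (a13 y - a13 (x \<otimes>\<^bsub>\<Gamma>\<^esub> y) + a13 x) mod 2 = (- (a12 x * a23 y)) mod 2) \<and>
        (\<forall>x\<in>carrier \<Gamma>. \<forall>y\<in>carrier \<Gamma>.
           (a24 y - a24 (x \<otimes>\<^bsub>\<Gamma>\<^esub> y) + a24 x) mod 2 = (- (a23 x * a34 y)) mod 2) \<and>
        v = (\<lambda>x y. if x \<in> carrier \<Gamma> \<and> y \<in> carrier \<Gamma>
                    then (- (a12 x * a24 y + a13 x * a34 y)) mod 2 else 0)}"

definition massey3_defined ::
  "('g, 'b) monoid_scheme \<Rightarrow> ('g \<Rightarrow> int) \<Rightarrow> ('g \<Rightarrow> int) \<Rightarrow> ('g \<Rightarrow> int) \<Rightarrow> bool" where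
  "massey3_defined \<Gamma> c1 c2 c3 \<longleftrightarrow> massey3_values \<Gamma> c1 c2 c3 \<noteq> {}"

definition massey3_vanishes ::
  "('g, 'b) monoid_scheme \<Rightarrow> ('g \<Rightarrow> int) \<Rightarrow> ('g \<Rightarrow> int) \<Rightarrow> ('g \<Rightarrow> int) \<Rightarrow> bool" where
  "massey3_vanishes \<Gamma> c1 c2 c3 \<longleftrightarrow>
     (\<exists>v \<in> massey3_values \<Gamma> c1 c2 c3. \<exists>c \<in> C1 \<Gamma> 2.
        \<forall>x\<in>carrier \<Gamma>. \<forall>y\<in>carrier \<Gamma>. v x y = (c y - c (x \<otimes>\<^bsub>\<Gamma>\<^esub> y) + c x) mod 2)"

end

theory Submission
  imports Defs "HOL-Computational_Algebra.Primes"
begin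

(* Since the relator a^2 b = b a^2 holds in every abelian group, H^1 of G with coefficients in
  Z/2^n is Hom(G, Z/2^n) = (Z/2^n)^2, the values on a and b being arbitrary; reducing a lift of
  the two values gives (1).
  For (2), x = a and y = b a b^-1 lie in H and x^2 = y^2, as a^2 is central. A character of H
  that is 1 on x and 0 on y exists (it factors through the wreath product Z/2 wr Z/2), but a lift
  F to Z/4 would give 2 F(x) = 2 F(y) in Z/4 with F(x) odd and F(y) even.
  For (3), take chi_a, chi_a, chi_b. A defining system factors through a group of order 16, a
  central extension of Z/4 x Z/2 (binom(a,2) mod 2 cobounds chi_a chi_a). For every value v
  of the Massey product, v(a^2, b) - v(b, a^2) is the value on a^2 of the cochain cobounding
  chi_a chi_a, which is chi_a(a)^2 = 1 mod 2; but this antisymmetrisation kills every coboundary at a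
  commuting pair. *)

abbreviation coboundary1 :: "('g, 'b) monoid_scheme \<Rightarrow> ('g \<Rightarrow> int) \<Rightarrow> 'g \<Rightarrow> 'g \<Rightarrow> int" where
  "coboundary1 \<Gamma> f x y \<equiv> f y - f (x \<otimes>\<^bsub>\<Gamma>\<^esub> y) + f x"

definition extend0 :: "('g, 'b) monoid_scheme \<Rightarrow> ('g \<Rightarrow> int) \<Rightarrow> 'g \<Rightarrow> int" where
  "extend0 \<Gamma> f x = (if x \<in> carrier \<Gamma> then f x else 0)"

lemma extend0_apply [simp]: "x \<in> carrier \<Gamma> \<Longrightarrow> extend0 \<Gamma> f x = f x"
  by (simp add: extend0_def)

lemma cont1_if_factors_through_hom:
  assumes \<Gamma>: "group \<Gamma>" and K: "group K" and h: "h \<in> hom \<Gamma> K"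
    and card: "card (carrier K) = 2 ^ m"
    and factors: "\<And>x y. x \<in> carrier \<Gamma> \<Longrightarrow> y \<in> carrier \<Gamma> \<Longrightarrow> h x = h y \<Longrightarrow> f x = f y"
  shows "cont1 \<Gamma> f"
proof -
  interpret h: group_hom \<Gamma> K h
    using \<Gamma> K h by (simp add: group_hom_def group_hom_axioms_def)
  let ?N = "kernel \<Gamma> K h" and ?I = "K\<lparr>carrier := h ` carrier \<Gamma>\<rparr>"
  have image: "subgroup (h ` carrier \<Gamma>) K"
    by (rule h.img_is_subgroup)
  have hI: "h \<in> hom \<Gamma> ?I"
    using h by (auto simp: hom_def)
  interpret h': group_hom \<Gamma> ?I h
    using \<Gamma> subgroup.subgroup_is_group[OF image K] hI by (simp add: group_hom_def group_hom_axioms_def)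
  have "kernel \<Gamma> ?I h = ?N"
    by (simp add: kernel_def)
  then have "\<Gamma> Mod ?N \<cong> ?I"
    using h'.FactGroup_iso by simp
  then have index: "card (rcosets\<^bsub>\<Gamma>\<^esub> ?N) = card (h ` carrier \<Gamma>)"
    by (auto dest: iso_same_card simp: FactGroup_def)
  have "card (rcosets\<^bsub>K\<^esub> (h ` carrier \<Gamma>)) * card (h ` carrier \<Gamma>) = 2 ^ m"
    using group.lagrange[OF K image] card by (simp add: order_def)
  then have "card (h ` carrier \<Gamma>) dvd 2 ^ m"
    by (metis dvd_triv_right)
  then obtain k where k: "card (h ` carrier \<Gamma>) = 2 ^ k"
    using divides_primepow_nat[of 2] by auto
  have "f x = f y" if "x \<in> carrier \<Gamma>" "y \<in> carrier \<Gamma>" "x \<otimes>\<^bsub>\<Gamma>\<^esub> inv\<^bsub>\<Gamma>\<^esub> y \<in> ?N" for x y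
  proof -
    have "h x \<otimes>\<^bsub>K\<^esub> inv\<^bsub>K\<^esub> h y = \<one>\<^bsub>K\<^esub>"
      using that by (simp add: kernel_def)
    then have "h x = h y"
      using that by (metis h.H.inv_equality h.H.inv_inv h.hom_closed h.H.inv_closed)
    then show ?thesis
      using factors that by blast
  qed
  moreover have "finite (rcosets\<^bsub>\<Gamma>\<^esub> ?N)"
    using index k by (metis card_ge_0_finite nat_zero_less_power_iff pos2)
  ultimately show ?thesis
    unfolding cont1_def pro2_open_def using h.normal_kernel index k by auto
qed

lemma extend0_comp_hom_in_C1:
  assumes "group \<Gamma>" "group K" "h \<in> hom \<Gamma> K" "card (carrier K) = 2 ^ k"
    and range: "\<And>q. q \<in> carrier K \<Longrightarrow> \<phi> q \<in> {0..<m}"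
  shows "extend0 \<Gamma> (\<lambda>x. \<phi> (h x)) \<in> C1 \<Gamma> m"
proof -
  have "0 < m"
    using range[OF monoid.one_closed[OF group.is_monoid[OF assms(2)]]] by simp
  moreover have "cont1 \<Gamma> (extend0 \<Gamma> (\<lambda>x. \<phi> (h x)))"
    by (rule cont1_if_factors_through_hom[OF assms(1-4)]) simp
  ultimately show ?thesis
    using range hom_in_carrier[OF assms(3)] by (auto simp: C1_def extend0_def)
qed

lemma mod_sum_iff_cocycle:
  fixes r a b M :: int
  assumes "r \<in> {0..<M}"
  shows "r = (a + b) mod M \<longleftrightarrow> (b - r + a) mod M = 0"
proof -
  have "r = (a + b) mod M \<longleftrightarrow> (a + b) mod M = r mod M"
    using assms by auto
  also have "\<dots> \<longleftrightarrow> M dvd b - r + a"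
    by (simp add: mod_eq_dvd_iff algebra_simps)
  finally show ?thesis
    by presburger
qed

lemma H1_iff_hom:
  assumes "0 < m"
  shows "f \<in> H1 \<Gamma> (int m) \<longleftrightarrow>
    cont1 \<Gamma> f \<and> f \<in> hom \<Gamma> (integer_mod_group m) \<and> (\<forall>x. x \<notin> carrier \<Gamma> \<longrightarrow> f x = 0)"
proof -
  have "(\<forall>x y. x \<in> carrier \<Gamma> \<longrightarrow> y \<in> carrier \<Gamma> \<longrightarrow> coboundary1 \<Gamma> f x y mod m = 0) \<longleftrightarrow>
        (\<forall>x y. x \<in> carrier \<Gamma> \<longrightarrow> y \<in> carrier \<Gamma> \<longrightarrow> f (x \<otimes>\<^bsub>\<Gamma>\<^esub> y) = (f x + f y) mod m)"
    if "\<forall>x. f x \<in> {0..<int m}"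
    using that mod_sum_iff_cocycle by blast
  moreover have "(\<forall>x. f x \<in> {0..<int m}) \<longleftrightarrow> f \<in> carrier \<Gamma> \<rightarrow> {0..<int m}"
    if "\<forall>x. x \<notin> carrier \<Gamma> \<longrightarrow> f x = 0"
    using that assms by (auto simp: Pi_def)
  ultimately show ?thesis
    unfolding H1_def C1_def hom_def carrier_integer_mod_group using assms by auto
qed

lemma extend0_hom_in_H1:
  assumes \<Gamma>: "group \<Gamma>" and \<chi>: "\<chi> \<in> hom \<Gamma> (integer_mod_group (2 ^ k))"
  shows "extend0 \<Gamma> \<chi> \<in> H1 \<Gamma> (2 ^ k)"
proof -
  have "extend0 \<Gamma> \<chi> \<in> hom \<Gamma> (integer_mod_group (2 ^ k))"
    using \<chi> monoid.m_closed[OF group.is_monoid[OF \<Gamma>]] by (simp add: hom_def Pi_def)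
  moreover have "cont1 \<Gamma> (extend0 \<Gamma> \<chi>)"
    by (rule cont1_if_factors_through_hom[OF \<Gamma> group_integer_mod_group \<chi>])
      (simp_all add: carrier_integer_mod_group)
  ultimately show ?thesis
    using H1_iff_hom[of "2 ^ k" "extend0 \<Gamma> \<chi>" \<Gamma>] by (simp add: extend0_def)
qed

lemma cont1_comp: "cont1 \<Gamma> f \<Longrightarrow> cont1 \<Gamma> (\<lambda>x. g (f x))"
  unfolding cont1_def by metis

lemma reduce_mod2_hom: "1 \<le> n \<Longrightarrow> (\<lambda>k. k mod 2) \<in> hom (integer_mod_group (2 ^ n)) (integer_mod_group 2)"
proof -
  assume "1 \<le> n"
  then have "(2::int) dvd 2 ^ n"
    by (simp add: dvd_power)
  then show ?thesis
    by (auto simp: hom_def carrier_integer_mod_group mod_mod_cancel mod_add_eq)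
qed

lemma reduce2_in_H1:
  assumes n: "1 \<le> n" and f: "f \<in> H1 \<Gamma> (2 ^ n)"
  shows "reduce2 f \<in> H1 \<Gamma> 2"
proof -
  have "cont1 \<Gamma> f" "f \<in> hom \<Gamma> (integer_mod_group (2 ^ n))" "\<forall>x. x \<notin> carrier \<Gamma> \<longrightarrow> f x = 0"
    using f H1_iff_hom[of "2 ^ n" f \<Gamma>] by simp_all
  then show ?thesis
    using hom_compose[OF _ reduce_mod2_hom[OF n]] H1_iff_hom[of 2 "reduce2 f" \<Gamma>]
    by (auto simp: reduce2_def comp_def intro: cont1_comp)
qed

section \<open>The group G and its universal property\<close>

definition cls :: "letter list \<Rightarrow> letter list set" where
  "cls w = {v. wrel v w}"

lemma wrel_append_left: "wrel u v \<Longrightarrow> wrel (x @ u) (x @ v)"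
proof (induction rule: wrel.induct)
  case (wcancel u g s v)
  then show ?case using wrel.wcancel[of "x @ u" g s v] by simp
next
  case (wrelator u v)
  then show ?case using wrel.wrelator[of "x @ u" v] by simp
qed (auto intro: wrel.intros)

lemma wrel_append_right: "wrel u v \<Longrightarrow> wrel (u @ x) (v @ x)"
proof (induction rule: wrel.induct)
  case (wcancel u g s v)
  then show ?case using wrel.wcancel[of u g s "v @ x"] by simp
next
  case (wrelator u v)
  then show ?case using wrel.wrelator[of u "v @ x"] by simp
qed (auto intro: wrel.intros)

lemma wrel_append: "wrel u u' \<Longrightarrow> wrel v v' \<Longrightarrow> wrel (u @ v) (u' @ v')"
  by (meson wrel_append_left wrel_append_right wtrans)

lemma mem_cls: "v \<in> cls w \<longleftrightarrow> wrel v w"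
  by (simp add: cls_def)

lemma cls_eq_iff: "cls u = cls v \<longleftrightarrow> wrel u v"
proof
  assume "cls u = cls v"
  then show "wrel u v"
    using wrefl[of u] by (simp add: set_eq_iff mem_cls)
next
  assume "wrel u v"
  then show "cls u = cls v"
    unfolding cls_def by (meson wsym wtrans)
qed

lemma carrier_Gp: "carrier Gp = range cls"
proof -
  have "{(u, v). wrel u v} `` {w} = cls w" for w
    unfolding cls_def by (auto intro: wsym)
  then show ?thesis
    unfolding Gp_def quotient_def by auto
qed

lemma cls_in_carrier_Gp [simp]: "cls w \<in> carrier Gp"
  by (simp add: carrier_Gp)

lemma cls_mult [simp]: "cls u \<otimes>\<^bsub>Gp\<^esub> cls v = cls (u @ v)"
  unfolding Gp_def Gmult_def cls_def by (auto dest: wrel_append intro: wrefl wtrans)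

lemma one_Gp: "\<one>\<^bsub>Gp\<^esub> = cls []"
  by (simp add: Gp_def cls_def)

definition word_inv :: "letter list \<Rightarrow> letter list" where
  "word_inv w = rev (map (\<lambda>(g, s). (g, \<not> s)) w)"

lemma wrel_word_inv_append: "wrel (word_inv w @ w) []"
proof (induction w)
  case Nil
  then show ?case by (simp add: word_inv_def wrefl)
next
  case (Cons l w)
  obtain g s where l: "l = (g, s)" by (cases l)
  have "word_inv (l # w) @ l # w = word_inv w @ [(g, \<not> s), (g, \<not> \<not> s)] @ w"
    by (simp add: word_inv_def l)
  moreover have "wrel (word_inv w @ [(g, \<not> s), (g, \<not> \<not> s)] @ w) (word_inv w @ w)"
    by (rule wcancel)
  ultimately show ?case
    using Cons wtrans by metis
qed

lemma group_Gp: "group Gp"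
proof (rule groupI)
  fix x y
  assume "x \<in> carrier Gp" "y \<in> carrier Gp"
  then show "x \<otimes>\<^bsub>Gp\<^esub> y \<in> carrier Gp"
    by (auto simp: carrier_Gp)
next
  fix x y z
  assume "x \<in> carrier Gp" "y \<in> carrier Gp" "z \<in> carrier Gp"
  then show "x \<otimes>\<^bsub>Gp\<^esub> y \<otimes>\<^bsub>Gp\<^esub> z = x \<otimes>\<^bsub>Gp\<^esub> (y \<otimes>\<^bsub>Gp\<^esub> z)"
    by (auto simp: carrier_Gp)
next
  fix x
  assume "x \<in> carrier Gp"
  then obtain w where x: "x = cls w"
    by (auto simp: carrier_Gp)
  show "\<one>\<^bsub>Gp\<^esub> \<otimes>\<^bsub>Gp\<^esub> x = x"
    unfolding x one_Gp by simp
  have "cls (word_inv w) \<otimes>\<^bsub>Gp\<^esub> x = \<one>\<^bsub>Gp\<^esub>"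
    using wrel_word_inv_append[of w] unfolding x one_Gp by (simp add: cls_eq_iff)
  then show "\<exists>y\<in>carrier Gp. y \<otimes>\<^bsub>Gp\<^esub> x = \<one>\<^bsub>Gp\<^esub>"
    by (rule bexI[OF _ cls_in_carrier_Gp])
qed (simp add: one_Gp)

interpretation Gp: group Gp
  by (rule group_Gp)

definition Gp_gen :: "gen \<Rightarrow> letter list set" where
  "Gp_gen g = cls [(g, True)]"

lemma Gp_gen_closed [simp]: "Gp_gen g \<in> carrier Gp"
  by (simp add: Gp_gen_def)

lemma hom_cls_Cons: "h \<in> hom Gp K \<Longrightarrow> h (cls (l # w)) = h (cls [l]) \<otimes>\<^bsub>K\<^esub> h (cls w)"
  using hom_mult[of h Gp K "cls [l]" "cls w"] by simp

lemma cls_letter: "cls [(g, s)] = (if s then Gp_gen g else inv\<^bsub>Gp\<^esub> Gp_gen g)"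
proof -
  have "cls [(g, False)] \<otimes>\<^bsub>Gp\<^esub> Gp_gen g = \<one>\<^bsub>Gp\<^esub>"
    using wcancel[of "[]" g False "[]"] by (simp add: Gp_gen_def one_Gp cls_eq_iff)
  then show ?thesis
    using Gp.inv_equality[of "cls [(g, False)]" "Gp_gen g"] by (simp add: Gp_gen_def)
qed

lemma Gp_relator:
  "Gp_gen Ga \<otimes>\<^bsub>Gp\<^esub> Gp_gen Ga \<otimes>\<^bsub>Gp\<^esub> Gp_gen Gb = Gp_gen Gb \<otimes>\<^bsub>Gp\<^esub> (Gp_gen Ga \<otimes>\<^bsub>Gp\<^esub> Gp_gen Ga)"
  using wrelator[of "[]" "[]"] by (simp add: Gp_gen_def cls_eq_iff)

lemma hom_Gp_eqI:
  assumes "group K" and h: "h \<in> hom Gp K" and h': "h' \<in> hom Gp K"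
    and gen: "\<And>g. h (Gp_gen g) = h' (Gp_gen g)" and x: "x \<in> carrier Gp"
  shows "h x = h' x"
proof -
  interpret h: group_hom Gp K h
    using assms by (simp add: group_hom_def group_hom_axioms_def)
  interpret h': group_hom Gp K h'
    using assms by (simp add: group_hom_def group_hom_axioms_def)
  have "h (cls w) = h' (cls w)" for w
  proof (induction w)
    case Nil
    then show ?case by (simp flip: one_Gp)
  next
    case (Cons l w)
    obtain g s where l: "l = (g, s)" by (cases l)
    have "h (cls (l # w)) = h (cls [l]) \<otimes>\<^bsub>K\<^esub> h (cls w)"
      using h by (rule hom_cls_Cons)
    also have "\<dots> = h' (cls [l]) \<otimes>\<^bsub>K\<^esub> h' (cls w)"
      by (simp add: l cls_letter gen Cons.IH)
    also have "\<dots> = h' (cls (l # w))"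
      using h' by (rule hom_cls_Cons[symmetric])
    finally show ?case .
  qed
  then show ?thesis
    using x by (auto simp: carrier_Gp)
qed

locale Gp_rep = K: group K for K (structure) +
  fixes \<alpha> :: "gen \<Rightarrow> 'a"
  assumes gen_closed: "\<alpha> g \<in> carrier K"
    and relator: "\<alpha> Ga \<otimes> \<alpha> Ga \<otimes> \<alpha> Gb = \<alpha> Gb \<otimes> (\<alpha> Ga \<otimes> \<alpha> Ga)"
begin

fun eval_word :: "letter list \<Rightarrow> 'a" where
  "eval_word [] = \<one>"
| "eval_word ((g, s) # w) = (if s then \<alpha> g else inv \<alpha> g) \<otimes> eval_word w"

lemma eval_word_closed: "eval_word w \<in> carrier K"
  by (induction w rule: eval_word.induct) (simp_all add: gen_closed)

lemma eval_word_append: "eval_word (u @ v) = eval_word u \<otimes> eval_word v"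
  by (induction u rule: eval_word.induct) (simp_all add: gen_closed eval_word_closed K.m_assoc)

lemma eval_word_wrel: "wrel u v \<Longrightarrow> eval_word u = eval_word v"
proof (induction rule: wrel.induct)
  case (wcancel u g s v)
  have "eval_word [(g, s), (g, \<not> s)] = \<one>"
    by (simp add: gen_closed)
  then show ?case
    by (simp only: eval_word_append) (simp add: eval_word_closed)
next
  case (wrelator u v)
  have "eval_word [(Ga, True), (Ga, True), (Gb, True)] = eval_word [(Gb, True), (Ga, True), (Ga, True)]"
    using relator by (simp add: gen_closed K.m_assoc)
  then show ?case
    by (metis append_Cons append_Nil eval_word_append)
qed simp_all

definition induced :: "letter list set \<Rightarrow> 'a" where
  "induced S = eval_word (SOME w. w \<in> S)"

lemma induced_cls [simp]: "induced (cls w) = eval_word w"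
proof -
  have "(SOME v. v \<in> cls w) \<in> cls w"
    by (rule someI[of _ w]) (simp add: mem_cls wrefl)
  then show ?thesis
    by (simp add: induced_def mem_cls eval_word_wrel)
qed

lemma induced_hom: "induced \<in> hom Gp K"
  by (auto simp: hom_def carrier_Gp eval_word_closed eval_word_append)

lemma induced_gen [simp]: "induced (Gp_gen g) = \<alpha> g"
  by (simp add: Gp_gen_def gen_closed)

end

section \<open>Lifting characters of G\<close>

lemma reduce2_image_H1_Gp:
  assumes n: "1 \<le> n"
  shows "reduce2 ` H1 Gp (2 ^ n) = H1 Gp 2"
proof
  show "reduce2 ` H1 Gp (2 ^ n) \<subseteq> H1 Gp 2"
    using reduce2_in_H1[OF n] by blast
next
  show "H1 Gp 2 \<subseteq> reduce2 ` H1 Gp (2 ^ n)"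
  proof
    fix f
    assume f: "f \<in> H1 Gp 2"
    then have f_hom: "f \<in> hom Gp (integer_mod_group 2)"
      and f_off: "\<forall>x. x \<notin> carrier Gp \<longrightarrow> f x = 0"
      using H1_iff_hom[of 2 f Gp] by simp_all
    have f_range: "f x \<in> {0..<2}" for x
      using f by (simp add: H1_def C1_def)
    have "(2::int) ^ 1 \<le> 2 ^ n"
      using n by (rule power_increasing) simp
    then have "f y \<in> carrier (integer_mod_group (2 ^ n))" for y
      using f_range[of y] by (simp add: carrier_integer_mod_group)
    then interpret \<rho>: Gp_rep "integer_mod_group (2 ^ n)" "\<lambda>g. f (Gp_gen g)"
      by (intro Gp_rep.intro Gp_rep_axioms.intro group_integer_mod_group) (simp_all add: add.commute)
    have lift: "extend0 Gp \<rho>.induced \<in> H1 Gp (2 ^ n)"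
      using extend0_hom_in_H1[OF group_Gp \<rho>.induced_hom] by simp
    have "\<rho>.induced x mod 2 = f x" if "x \<in> carrier Gp" for x
      using hom_Gp_eqI[OF group_integer_mod_group hom_compose[OF \<rho>.induced_hom reduce_mod2_hom[OF n]]
          f_hom _ that] f_range
      by (simp add: comp_def)
    then have "reduce2 (extend0 Gp \<rho>.induced) = f"
      using f_off by (auto simp: reduce2_def extend0_def)
    then show "f \<in> reduce2 ` H1 Gp (2 ^ n)"
      using lift by (rule image_eqI[OF sym])
  qed
qed

section \<open>A character of H that does not lift to Z/4\<close>

lemma not_in_reduce2_image_H1_if_squares_equal:
  assumes x: "x \<in> carrier \<Gamma>" and y: "y \<in> carrier \<Gamma>"
    and squares: "x \<otimes>\<^bsub>\<Gamma>\<^esub> x = y \<otimes>\<^bsub>\<Gamma>\<^esub> y" and "\<chi> x \<noteq> \<chi> y"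
  shows "\<chi> \<notin> reduce2 ` H1 \<Gamma> 4"
proof
  assume "\<chi> \<in> reduce2 ` H1 \<Gamma> 4"
  then obtain F where F: "F \<in> H1 \<Gamma> 4" and \<chi>_F: "\<chi> = reduce2 F"
    by blast
  have "F \<in> hom \<Gamma> (integer_mod_group 4)"
    using F H1_iff_hom[of 4 F \<Gamma>] by simp
  then have "(F x + F x) mod 4 = (F y + F y) mod 4"
    using x y squares by (metis hom_mult mult_integer_mod_group of_nat_numeral)
  moreover have "F x mod 2 \<noteq> F y mod 2"
    using \<open>\<chi> x \<noteq> \<chi> y\<close> by (simp add: \<chi>_F reduce2_def)
  ultimately show False
    by presburger
qed

text \<open>The wreath product Z/2 wr Z/2: the top coordinate t acts by swapping the coordinates x and y.\<close>
definition Wreath :: "(int \<times> int \<times> int) monoid" where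
  "Wreath = \<lparr>carrier = {0..<2} \<times> {0..<2} \<times> {0..<2},
     monoid.mult = (\<lambda>(x1, y1, t1) (x2, y2, t2).
        if t1 = 0 then ((x1 + x2) mod 2, (y1 + y2) mod 2, (t1 + t2) mod 2)
        else ((x1 + y2) mod 2, (y1 + x2) mod 2, (t1 + t2) mod 2)),
     monoid.one = (0, 0, 0)\<rparr>"

lemma Wreath_mult [simp]:
  "(x1, y1, t1) \<otimes>\<^bsub>Wreath\<^esub> (x2, y2, t2) =
    (if t1 = 0 then ((x1 + x2) mod 2, (y1 + y2) mod 2, (t1 + t2) mod 2)
     else ((x1 + y2) mod 2, (y1 + x2) mod 2, (t1 + t2) mod 2))"
  by (simp add: Wreath_def)

lemma one_Wreath: "\<one>\<^bsub>Wreath\<^esub> = (0, 0, 0)"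
  by (simp add: Wreath_def)

lemma carrier_Wreath: "carrier Wreath = {0..<2} \<times> {0..<2} \<times> {0..<2}"
  by (simp add: Wreath_def)

lemma Wreath_inverse:
  assumes "(x, y, t) \<in> carrier Wreath"
  shows "(if t = 0 then (x, y, t) else (y, x, t)) \<otimes>\<^bsub>Wreath\<^esub> (x, y, t) = \<one>\<^bsub>Wreath\<^esub>"
proof -
  have "x = 0 \<or> x = 1" "y = 0 \<or> y = 1" "t = 0 \<or> t = 1"
    using assms by (auto simp: carrier_Wreath)
  then show ?thesis
    by (auto simp: one_Wreath)
qed

lemma group_Wreath: "group Wreath"
proof (rule groupI)
  fix p q r
  assume "p \<in> carrier Wreath" "q \<in> carrier Wreath" "r \<in> carrier Wreath"
  then obtain x1 y1 t1 x2 y2 t2 x3 y3 t3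
    where pqr: "p = (x1, y1, t1)" "q = (x2, y2, t2)" "r = (x3, y3, t3)"
      and t: "t1 \<in> {0..<2}" "t2 \<in> {0..<2}"
    by (auto simp: carrier_Wreath)
  show "p \<otimes>\<^bsub>Wreath\<^esub> q \<in> carrier Wreath"
    by (simp add: pqr carrier_Wreath)
  have "t1 = 0 \<or> t1 = 1" "t2 = 0 \<or> t2 = 1"
    using t by auto
  then show "p \<otimes>\<^bsub>Wreath\<^esub> q \<otimes>\<^bsub>Wreath\<^esub> r = p \<otimes>\<^bsub>Wreath\<^esub> (q \<otimes>\<^bsub>Wreath\<^esub> r)"
    by (elim disjE) (simp_all add: pqr mod_simps add_ac)
next
  fix p
  assume p: "p \<in> carrier Wreath"
  then show "\<one>\<^bsub>Wreath\<^esub> \<otimes>\<^bsub>Wreath\<^esub> p = p"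
    by (auto simp: Wreath_def)
  obtain x y t where xyt: "p = (x, y, t)"
    by (cases p)
  then show "\<exists>q\<in>carrier Wreath. q \<otimes>\<^bsub>Wreath\<^esub> p = \<one>\<^bsub>Wreath\<^esub>"
    using p Wreath_inverse by (intro bexI[of _ "if t = 0 then (x, y, t) else (y, x, t)"])
      (auto simp: carrier_Wreath)
qed (simp add: Wreath_def)

interpretation Wreath: group Wreath
  by (rule group_Wreath)

lemma inv_Wreath:
  "(x, y, t) \<in> carrier Wreath \<Longrightarrow> inv\<^bsub>Wreath\<^esub> (x, y, t) = (if t = 0 then (x, y, t) else (y, x, t))"
  by (rule Wreath.inv_equality[OF Wreath_inverse]) (auto simp: carrier_Wreath)

lemma Wreath_top_hom: "(\<lambda>p. snd (snd p)) \<in> hom Wreath (integer_mod_group 2)"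
  by (auto simp: hom_def carrier_Wreath carrier_integer_mod_group)

definition wreath_gen :: "gen \<Rightarrow> int \<times> int \<times> int" where
  "wreath_gen g = (if g = Ga then (1, 0, 0) else (0, 0, 1))"

lemma Gp_rep_Wreath: "Gp_rep Wreath wreath_gen"
  by (intro Gp_rep.intro Gp_rep_axioms.intro group_Wreath) (simp_all add: wreath_gen_def carrier_Wreath)

definition wreath_hom :: "letter list set \<Rightarrow> int \<times> int \<times> int" where
  "wreath_hom = Gp_rep.induced Wreath wreath_gen"

lemma wreath_hom_in_hom: "wreath_hom \<in> hom Gp Wreath"
  unfolding wreath_hom_def by (rule Gp_rep.induced_hom[OF Gp_rep_Wreath])

interpretation wreath_hom: group_hom Gp Wreath wreath_hom
  using wreath_hom_in_hom by (simp add: group_hom_def group_hom_axioms_def group_Gp group_Wreath)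

lemma wreath_hom_gen [simp]: "wreath_hom (Gp_gen g) = wreath_gen g"
  unfolding wreath_hom_def by (rule Gp_rep.induced_gen[OF Gp_rep_Wreath])

lemma wreath_hom_top_cls:
  "snd (snd (wreath_hom (cls w))) = int (length (filter (\<lambda>l. fst l = Gb) w)) mod 2"
proof (induction w)
  case Nil
  then show ?case
    by (simp add: one_Wreath flip: one_Gp)
next
  case (Cons l w)
  obtain g s where l: "l = (g, s)"
    by (cases l)
  have "wreath_hom (cls [l]) = wreath_gen g"
    by (auto simp: l cls_letter wreath_gen_def inv_Wreath carrier_Wreath)
  moreover obtain x y t where "wreath_hom (cls w) = (x, y, t)"
    by (cases "wreath_hom (cls w)")
  ultimately show ?case
    using Cons hom_cls_Cons[OF wreath_hom_in_hom, of l w]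
    by (cases g) (simp_all add: l wreath_gen_def mod_simps)
qed

lemma cls_in_Hsub_iff: "cls w \<in> Hsub \<longleftrightarrow> snd (snd (wreath_hom (cls w))) = 0"
proof -
  let ?even_b = "\<lambda>v. even (length (filter (\<lambda>l. fst l = Gb) v))"
  have "cls w \<in> Hsub \<longleftrightarrow> (\<forall>v. wrel v w \<longrightarrow> ?even_b v)"
    by (auto simp: Hsub_def mem_cls)
  also have "\<dots> \<longleftrightarrow> ?even_b w"
  proof
    assume "?even_b w"
    moreover have "?even_b v \<longleftrightarrow> ?even_b w" if "wrel v w" for v
      using that wreath_hom_top_cls[of v] wreath_hom_top_cls[of w]
      by (simp add: flip: cls_eq_iff) presburger
    ultimately show "\<forall>v. wrel v w \<longrightarrow> ?even_b v"
      by blast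
  qed (simp add: wrefl)
  also have "\<dots> \<longleftrightarrow> snd (snd (wreath_hom (cls w))) = 0"
    by (simp add: wreath_hom_top_cls) presburger
  finally show ?thesis .
qed

lemma Hsub_eq_kernel: "Hsub = kernel Gp (integer_mod_group 2) (\<lambda>x. snd (snd (wreath_hom x)))"
proof (rule Set.set_eqI)
  fix x
  show "x \<in> Hsub \<longleftrightarrow> x \<in> kernel Gp (integer_mod_group 2) (\<lambda>x. snd (snd (wreath_hom x)))"
  proof (cases "x \<in> carrier Gp")
    case True
    then obtain w where "x = cls w"
      by (auto simp: carrier_Gp)
    then show ?thesis
      by (simp add: cls_in_Hsub_iff kernel_def)
  next
    case False
    then show ?thesis
      by (simp add: Hsub_def kernel_def)
  qed
qed

lemma subgroup_Hsub: "subgroup Hsub Gp"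
  unfolding Hsub_eq_kernel
  by (rule group_hom.subgroup_kernel)
    (simp add: group_hom_def group_hom_axioms_def group_Gp hom_compose[OF wreath_hom_in_hom Wreath_top_hom, unfolded comp_def])

lemma group_Hp: "group Hp"
  unfolding Hp_def by (rule Gp.subgroup_imp_group[OF subgroup_Hsub])

lemma carrier_Hp: "carrier Hp = Hsub"
  by (simp add: Hp_def)

definition chi_H :: "letter list set \<Rightarrow> int" where
  "chi_H = extend0 Hp (\<lambda>x. fst (wreath_hom x))"

lemma chi_H_H1: "chi_H \<in> H1 Hp 2"
proof -
  have top: "x \<in> carrier Gp" "snd (snd (wreath_hom x)) = 0" if "x \<in> carrier Hp" for x
    using that by (simp_all add: carrier_Hp Hsub_eq_kernel kernel_def)
  have "(\<lambda>x. fst (wreath_hom x)) \<in> hom Hp (integer_mod_group 2)"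
  proof (rule homI)
    fix x y
    assume "x \<in> carrier Hp" "y \<in> carrier Hp"
    then show "fst (wreath_hom (x \<otimes>\<^bsub>Hp\<^esub> y)) = fst (wreath_hom x) \<otimes>\<^bsub>integer_mod_group 2\<^esub> fst (wreath_hom y)"
      using top[of x] top[of y] by (cases "wreath_hom x", cases "wreath_hom y") (simp add: Hp_def)
  next
    fix x
    assume "x \<in> carrier Hp"
    then show "fst (wreath_hom x) \<in> carrier (integer_mod_group 2)"
      using top(1) wreath_hom.hom_closed by (force simp: carrier_Wreath carrier_integer_mod_group)
  qed
  then show ?thesis
    using extend0_hom_in_H1[OF group_Hp, of _ 1] by (simp add: chi_H_def)
qed

lemma Gp_conj_square:
  defines "a \<equiv> Gp_gen Ga" and "b \<equiv> Gp_gen Gb"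
  shows "a \<otimes>\<^bsub>Gp\<^esub> a = (b \<otimes>\<^bsub>Gp\<^esub> a \<otimes>\<^bsub>Gp\<^esub> inv\<^bsub>Gp\<^esub> b) \<otimes>\<^bsub>Gp\<^esub> (b \<otimes>\<^bsub>Gp\<^esub> a \<otimes>\<^bsub>Gp\<^esub> inv\<^bsub>Gp\<^esub> b)"
proof -
  have ab: "a \<in> carrier Gp" "b \<in> carrier Gp"
    by (simp_all add: a_def b_def)
  have cancel: "inv\<^bsub>Gp\<^esub> b \<otimes>\<^bsub>Gp\<^esub> (b \<otimes>\<^bsub>Gp\<^esub> z) = z" if "z \<in> carrier Gp" for z
    using ab that by (simp add: Gp.m_assoc[symmetric])
  have "(b \<otimes>\<^bsub>Gp\<^esub> a \<otimes>\<^bsub>Gp\<^esub> inv\<^bsub>Gp\<^esub> b) \<otimes>\<^bsub>Gp\<^esub> (b \<otimes>\<^bsub>Gp\<^esub> a \<otimes>\<^bsub>Gp\<^esub> inv\<^bsub>Gp\<^esub> b)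
      = b \<otimes>\<^bsub>Gp\<^esub> (a \<otimes>\<^bsub>Gp\<^esub> a) \<otimes>\<^bsub>Gp\<^esub> inv\<^bsub>Gp\<^esub> b"
    using ab by (simp add: Gp.m_assoc cancel)
  also have "\<dots> = a \<otimes>\<^bsub>Gp\<^esub> a \<otimes>\<^bsub>Gp\<^esub> b \<otimes>\<^bsub>Gp\<^esub> inv\<^bsub>Gp\<^esub> b"
    using Gp_relator by (simp add: a_def b_def)
  also have "\<dots> = a \<otimes>\<^bsub>Gp\<^esub> a"
    using ab by (simp add: Gp.m_assoc)
  finally show ?thesis ..
qed

lemma reduce2_image_H1_Hp_neq: "reduce2 ` H1 Hp 4 \<noteq> H1 Hp 2"
proof -
  define x where "x = Gp_gen Ga"
  define y where "y = Gp_gen Gb \<otimes>\<^bsub>Gp\<^esub> Gp_gen Ga \<otimes>\<^bsub>Gp\<^esub> inv\<^bsub>Gp\<^esub> Gp_gen Gb"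
  have "wreath_hom x = (1, 0, 0)" "wreath_hom y = (0, 1, 0)"
    by (simp_all add: x_def y_def wreath_gen_def inv_Wreath carrier_Wreath)
  then have xy: "x \<in> carrier Hp" "y \<in> carrier Hp" "chi_H x = 1" "chi_H y = 0"
    by (simp_all add: x_def y_def carrier_Hp Hsub_eq_kernel kernel_def chi_H_def)
  have "x \<otimes>\<^bsub>Hp\<^esub> x = y \<otimes>\<^bsub>Hp\<^esub> y"
    using Gp_conj_square by (simp add: Hp_def x_def y_def)
  then have "chi_H \<notin> reduce2 ` H1 Hp 4"
    by (rule not_in_reduce2_image_H1_if_squares_equal[OF xy(1,2)]) (simp add: xy)
  then show ?thesis
    using chi_H_H1 by blast
qed

section \<open>A non-vanishing triple Massey product of G\<close>

lemma massey3_not_vanishes_if_square_commutes: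
  assumes \<Gamma>: "group \<Gamma>" and \<chi>1: "\<chi>1 \<in> H1 \<Gamma> 2" and \<chi>3: "\<chi>3 \<in> H1 \<Gamma> 2"
    and x: "x \<in> carrier \<Gamma>" and y: "y \<in> carrier \<Gamma>"
    and comm: "x \<otimes>\<^bsub>\<Gamma>\<^esub> x \<otimes>\<^bsub>\<Gamma>\<^esub> y = y \<otimes>\<^bsub>\<Gamma>\<^esub> (x \<otimes>\<^bsub>\<Gamma>\<^esub> x)"
    and chi_vals: "\<chi>1 x = 1" "\<chi>2 x = 1" "\<chi>1 y = 0" "\<chi>3 y = 1"
  shows "\<not> massey3_vanishes \<Gamma> \<chi>1 \<chi>2 \<chi>3"
proof
  assume "massey3_vanishes \<Gamma> \<chi>1 \<chi>2 \<chi>3"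
  then obtain v c where v: "v \<in> massey3_values \<Gamma> \<chi>1 \<chi>2 \<chi>3"
    and dc: "\<forall>p\<in>carrier \<Gamma>. \<forall>q\<in>carrier \<Gamma>. v p q = coboundary1 \<Gamma> c p q mod 2"
    unfolding massey3_vanishes_def by blast
  then obtain a13 a24 where
    d13: "\<forall>p\<in>carrier \<Gamma>. \<forall>q\<in>carrier \<Gamma>. coboundary1 \<Gamma> a13 p q mod 2 = (- (\<chi>1 p * \<chi>2 q)) mod 2"
    and v_eq: "v = (\<lambda>p q. if p \<in> carrier \<Gamma> \<and> q \<in> carrier \<Gamma>
                          then (- (\<chi>1 p * a24 q + a13 p * \<chi>3 q)) mod 2 else 0)"
    unfolding massey3_values_def by blast
  define s where "s = x \<otimes>\<^bsub>\<Gamma>\<^esub> x"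
  have s: "s \<in> carrier \<Gamma>"
    using x \<Gamma> by (simp add: s_def group.is_monoid monoid.m_closed)
  have "\<chi> s = (\<chi> x + \<chi> x) mod 2" if "\<chi> \<in> H1 \<Gamma> 2" for \<chi>
  proof -
    have "\<chi> \<in> hom \<Gamma> (integer_mod_group 2)"
      using that H1_iff_hom[of 2 \<chi> \<Gamma>] by simp
    then show ?thesis
      using x by (simp add: s_def hom_mult)
  qed
  then have "\<chi>1 s = 0" "\<chi>3 s = 0"
    using \<chi>1 \<chi>3 chi_vals by simp_all
  moreover have "odd (a13 s)"
    using d13[rule_format, OF x x] chi_vals by (simp add: s_def) presburger
  ultimately have "v s y mod 2 \<noteq> v y s mod 2"
    using s y chi_vals by (simp add: v_eq) presburger
  moreover have "v s y = v y s"
    using dc s y comm by (simp add: s_def algebra_simps)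
  ultimately show False
    by simp
qed

definition Heis :: "(int \<times> int \<times> int) monoid" where
  "Heis = \<lparr>carrier = {0..<4} \<times> {0..<2} \<times> {0..<2},
     monoid.mult = (\<lambda>(a1, b1, z1) (a2, b2, z2). ((a1 + a2) mod 4, (b1 + b2) mod 2, (z1 + z2 + a1 * b2) mod 2)),
     monoid.one = (0, 0, 0)\<rparr>"

lemma Heis_mult [simp]:
  "(a1, b1, z1) \<otimes>\<^bsub>Heis\<^esub> (a2, b2, z2) = ((a1 + a2) mod 4, (b1 + b2) mod 2, (z1 + z2 + a1 * b2) mod 2)"
  by (simp add: Heis_def)

lemma carrier_Heis: "carrier Heis = {0..<4} \<times> {0..<2} \<times> {0..<2}"
  by (simp add: Heis_def)

lemma Heis_assoc_z:
  fixes a1 a2 b2 b3 z1 z2 z3 :: int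
  shows "((z1 + z2 + a1 * b2) mod 2 + z3 + (a1 + a2) mod 4 * b3) mod 2
       = (z1 + (z2 + z3 + a2 * b3) mod 2 + a1 * ((b2 + b3) mod 2)) mod 2"
proof -
  have "((z1 + z2 + a1 * b2) mod 2 + z3 + (a1 + a2) mod 4 * b3) mod 2
      = (z1 + z2 + a1 * b2 + z3 + (a1 + a2) * b3) mod 2"
    by (intro mod_add_cong mod_mult_cong) (simp_all add: mod_mod_cancel)
  also have "\<dots> = (z1 + (z2 + z3 + a2 * b3) + a1 * (b2 + b3)) mod 2"
    by (simp add: algebra_simps)
  also have "\<dots> = (z1 + (z2 + z3 + a2 * b3) mod 2 + a1 * ((b2 + b3) mod 2)) mod 2"
    by (intro mod_add_cong mod_mult_cong) simp_all
  finally show ?thesis .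
qed

lemma Heis_inv_z: "(((z::int) + a * b) mod 2 + z + (- a) mod 4 * b) mod 2 = 0"
proof -
  have "((z + a * b) mod 2 + z + (- a) mod 4 * b) mod 2 = (z + a * b + z + (- a) * b) mod 2"
    by (intro mod_add_cong mod_mult_cong) (simp_all add: mod_mod_cancel)
  then show ?thesis
    by simp
qed

lemma group_Heis: "group Heis"
proof (rule groupI)
  fix x y z
  assume "x \<in> carrier Heis" "y \<in> carrier Heis" "z \<in> carrier Heis"
  then obtain a1 b1 z1 a2 b2 z2 a3 b3 z3
    where xyz: "x = (a1, b1, z1)" "y = (a2, b2, z2)" "z = (a3, b3, z3)"
    by (metis prod_cases3)
  show "x \<otimes>\<^bsub>Heis\<^esub> y \<in> carrier Heis"
    by (simp add: xyz carrier_Heis)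
  have "x \<otimes>\<^bsub>Heis\<^esub> y \<otimes>\<^bsub>Heis\<^esub> z = (((a1 + a2) mod 4 + a3) mod 4, ((b1 + b2) mod 2 + b3) mod 2,
      ((z1 + z2 + a1 * b2) mod 2 + z3 + (a1 + a2) mod 4 * b3) mod 2)"
    by (simp add: xyz)
  also have "\<dots> = ((a1 + (a2 + a3) mod 4) mod 4, (b1 + (b2 + b3) mod 2) mod 2,
      (z1 + (z2 + z3 + a2 * b3) mod 2 + a1 * ((b2 + b3) mod 2)) mod 2)"
    unfolding Heis_assoc_z by (simp add: mod_simps add.assoc)
  also have "\<dots> = x \<otimes>\<^bsub>Heis\<^esub> (y \<otimes>\<^bsub>Heis\<^esub> z)"
    by (simp add: xyz)
  finally show "x \<otimes>\<^bsub>Heis\<^esub> y \<otimes>\<^bsub>Heis\<^esub> z = x \<otimes>\<^bsub>Heis\<^esub> (y \<otimes>\<^bsub>Heis\<^esub> z)" .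
next
  fix x
  assume x_in: "x \<in> carrier Heis"
  then show "\<one>\<^bsub>Heis\<^esub> \<otimes>\<^bsub>Heis\<^esub> x = x"
    by (auto simp: Heis_def)
  obtain a b z where x: "x = (a, b, z)"
    by (cases x)
  have "((- a) mod 4, b, (z + a * b) mod 2) \<otimes>\<^bsub>Heis\<^esub> x = \<one>\<^bsub>Heis\<^esub>"
    by (simp add: x Heis_def Heis_inv_z mod_simps)
  moreover have "((- a) mod 4, b, (z + a * b) mod 2) \<in> carrier Heis"
    using x_in by (simp add: x carrier_Heis)
  ultimately show "\<exists>y\<in>carrier Heis. y \<otimes>\<^bsub>Heis\<^esub> x = \<one>\<^bsub>Heis\<^esub>"
    by blast
qed (simp add: Heis_def)

definition heis_gen :: "gen \<Rightarrow> int \<times> int \<times> int" where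
  "heis_gen g = (if g = Ga then (1, 0, 0) else (0, 1, 0))"

lemma Gp_rep_Heis: "Gp_rep Heis heis_gen"
  by (intro Gp_rep.intro Gp_rep_axioms.intro group_Heis) (simp_all add: heis_gen_def carrier_Heis)

definition heis_hom :: "letter list set \<Rightarrow> int \<times> int \<times> int" where
  "heis_hom = Gp_rep.induced Heis heis_gen"

lemma heis_hom_in_hom: "heis_hom \<in> hom Gp Heis"
  unfolding heis_hom_def by (rule Gp_rep.induced_hom[OF Gp_rep_Heis])

lemma heis_hom_gen [simp]: "heis_hom (Gp_gen g) = heis_gen g"
  unfolding heis_hom_def by (rule Gp_rep.induced_gen[OF Gp_rep_Heis])

lemma card_Heis: "card (carrier Heis) = 2 ^ 4"
  by (simp add: carrier_Heis card_cartesian_product)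

definition chi_a :: "letter list set \<Rightarrow> int" where
  "chi_a = extend0 Gp (\<lambda>x. fst (heis_hom x) mod 2)"

definition chi_b :: "letter list set \<Rightarrow> int" where
  "chi_b = extend0 Gp (\<lambda>x. fst (snd (heis_hom x)))"

lemma chi_a_H1: "chi_a \<in> H1 Gp 2"
proof -
  have "(\<lambda>p. fst p mod 2) \<in> hom Heis (integer_mod_group 2)"
    by (auto simp: hom_def carrier_Heis carrier_integer_mod_group mod_add_eq mod_mod_cancel)
  then show ?thesis
    using extend0_hom_in_H1[OF group_Gp hom_compose[OF heis_hom_in_hom], of _ 1]
    by (simp add: chi_a_def comp_def)
qed

lemma chi_b_H1: "chi_b \<in> H1 Gp 2"
proof -
  have "(\<lambda>p. fst (snd p)) \<in> hom Heis (integer_mod_group 2)"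
    by (auto simp: hom_def carrier_Heis carrier_integer_mod_group)
  then show ?thesis
    using extend0_hom_in_H1[OF group_Gp hom_compose[OF heis_hom_in_hom], of _ 1]
    by (simp add: chi_b_def comp_def)
qed

definition binom2_mod2 :: "int \<Rightarrow> int" where
  "binom2_mod2 a = (a * (a - 1) div 2) mod 2"

lemma coboundary1_binom2_mod2_Heis:
  assumes "p \<in> carrier Heis" "q \<in> carrier Heis"
  shows "coboundary1 Heis (\<lambda>p. binom2_mod2 (fst p)) p q mod 2 = (- (fst p mod 2 * (fst q mod 2))) mod 2"
proof -
  obtain a1 b1 z1 a2 b2 z2 where pq: "p = (a1, b1, z1)" "q = (a2, b2, z2)"
    and "a1 \<in> {0..<4}" "a2 \<in> {0..<4}"
    using assms by (cases p, cases q) (auto simp: carrier_Heis)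
  moreover have "a1 \<in> {0, 1, 2, 3}" "a2 \<in> {0, 1, 2, 3}"
    using calculation(3,4) by auto
  ultimately show ?thesis
    by (auto simp: binom2_mod2_def)
qed

lemma coboundary1_z_Heis:
  "coboundary1 Heis (\<lambda>p. snd (snd p)) p q mod 2 = (- (fst p mod 2 * fst (snd q))) mod 2"
proof -
  obtain a1 b1 z1 a2 b2 z2 where pq: "p = (a1, b1, z1)" "q = (a2, b2, z2)"
    by (cases p, cases q)
  have "(z2 - (z1 + z2 + a1 * b2) mod 2 + z1) mod 2 = (z2 - (z1 + z2 + a1 * b2) + z1) mod 2"
    by (intro mod_add_cong mod_diff_cong) simp_all
  moreover have "(- (a1 mod 2 * b2)) mod 2 = (- (a1 * b2)) mod 2"
    by (intro mod_minus_cong mod_mult_cong) simp_all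
  ultimately show ?thesis
    by (simp add: pq)
qed

lemma massey3_defined_chi_a_chi_a_chi_b: "massey3_defined Gp chi_a chi_a chi_b"
proof -
  let ?a13 = "extend0 Gp (\<lambda>x. binom2_mod2 (fst (heis_hom x)))"
  let ?a24 = "extend0 Gp (\<lambda>x. snd (snd (heis_hom x)))"
  have C1: "?a13 \<in> C1 Gp 2" "?a24 \<in> C1 Gp 2"
    by (rule extend0_comp_hom_in_C1[OF group_Gp group_Heis heis_hom_in_hom card_Heis];
        auto simp: carrier_Heis binom2_mod2_def)+
  have "coboundary1 Gp ?a13 x y mod 2 = (- (chi_a x * chi_a y)) mod 2"
    "coboundary1 Gp ?a24 x y mod 2 = (- (chi_a x * chi_b y)) mod 2"
    if "x \<in> carrier Gp" "y \<in> carrier Gp" for x y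
    using that hom_in_carrier[OF heis_hom_in_hom]
    by (simp_all add: hom_mult[OF heis_hom_in_hom] coboundary1_binom2_mod2_Heis coboundary1_z_Heis
        chi_a_def chi_b_def)
  then show ?thesis
    unfolding massey3_defined_def massey3_values_def using C1 by blast
qed

lemma massey3_not_vanishes_chi_a_chi_a_chi_b: "\<not> massey3_vanishes Gp chi_a chi_a chi_b"
  by (rule massey3_not_vanishes_if_square_commutes[OF group_Gp chi_a_H1 chi_b_H1
        Gp_gen_closed Gp_gen_closed Gp_relator])
    (simp_all add: chi_a_def chi_b_def heis_gen_def)

theorem proposition8p1:
  shows "(\<forall>n::nat. n \<ge> 1 \<longrightarrow> reduce2 ` H1 Gp (2 ^ n) = H1 Gp 2)
       \<and> reduce2 ` H1 Hp 4 \<noteq> H1 Hp 2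
       \<and> (\<exists>\<chi>1 \<chi>2 \<chi>3. \<chi>1 \<in> H1 Gp 2 \<and> \<chi>2 \<in> H1 Gp 2 \<and> \<chi>3 \<in> H1 Gp 2
            \<and> massey3_defined Gp \<chi>1 \<chi>2 \<chi>3 \<and> \<not> massey3_vanishes Gp \<chi>1 \<chi>2 \<chi>3)"
proof (intro conjI)
  show "\<forall>n::nat. n \<ge> 1 \<longrightarrow> reduce2 ` H1 Gp (2 ^ n) = H1 Gp 2"
    by (simp add: reduce2_image_H1_Gp)
  show "reduce2 ` H1 Hp 4 \<noteq> H1 Hp 2"
    by (rule reduce2_image_H1_Hp_neq)
  have "chi_a \<in> H1 Gp 2 \<and> chi_b \<in> H1 Gp 2 \<and> massey3_defined Gp chi_a chi_a chi_b
      \<and> \<not> massey3_vanishes Gp chi_a chi_a chi_b"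
    using chi_a_H1 chi_b_H1 massey3_defined_chi_a_chi_a_chi_b massey3_not_vanishes_chi_a_chi_a_chi_b
    by simp
  then show "\<exists>\<chi>1 \<chi>2 \<chi>3. \<chi>1 \<in> H1 Gp 2 \<and> \<chi>2 \<in> H1 Gp 2 \<and> \<chi>3 \<in> H1 Gp 2
      \<and> massey3_defined Gp \<chi>1 \<chi>2 \<chi>3 \<and> \<not> massey3_vanishes Gp \<chi>1 \<chi>2 \<chi>3"
    by blast
qed

end
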